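(* Let $m,n\ge1$ and let $F\subseteq\{1,\dots,m\}\times\{1,\dots,n\}$ be a binary image with row sums $(r_1,\dots,r_m)$ and column sums $(c_1,\dots,c_n)$ (no assumption on $r_1$ or $r_m$). Let $L_h(F)$ be the length of the horizontal boundary of $F$. Define $b_i=\#\{j:c_j\ge i\}$ and $d_i=b_i-r_i$ for $i=1,\dots,m$, and set $d_0=d_{m+1}=0$. Let $k$ be an integer with $1\le k\le m$ such that $d_k<0$ and $d_{k+1}\ge0$, and let $\sigma=\sum_{i=1}^k d_i$. Then for all integers $t,s\ge0$, every set of indices $\{i_1<\dots<i_{2t+1}\}\subseteq\{0,1,\dots,k,m+1\}$ and every set of indices $\{\tilde i_1<\dots<\tilde i_{2s+1}\}\subseteq\{0,k+1,k+2,\dots,m+1\}$, \[ L_h(F)\ \ge\ 2r_1+\big(d_{i_1}-d_{i_2}+d_{i_3}-\cdots-d_{i_{2t}}+2d_{i_{2t+1}}\big)+\big(d_{\tilde i_1}-d_{\tilde i_2}+d_{\tilde i_3}-\cdots-d_{\tilde i_{2s}}+2d_{\tilde i_{2s+1}}\big)-\sigma. \]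
   Context: A binary image is a finite set $F\subseteq\mathbb Z^2$; point $(i,j)$ lies in row $i$ and column $j$. The row sum $r_i$ is the number of points of $F$ in row $i$, and the column sum $c_j$ is the number of points of $F$ in column $j$. The horizontal boundary of $F$ is the set of ordered pairs of points $((i,j),(i',j))$ of $\mathbb Z^2$ with $|i-i'|=1$, $(i,j)\in F$ and $(i',j)\notin F$; its length is the number of such pairs. *)

theory Defs
  imports Main
begin

definition row_sum :: "(int \<times> int) set \<Rightarrow> int \<Rightarrow> nat" where
  "row_sum F i = card {j. (i, j) \<in> F}"

definition col_sum :: "(int \<times> int) set \<Rightarrow> int \<Rightarrow> nat" where
  "col_sum F j = card {i. (i, j) \<in> F}"

definition hboundary :: "(int \<times> int) set \<Rightarrow> ((int \<times> int) \<times> (int \<times> int)) set" where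
  "hboundary F = {((i, j), (i', j)) | i j i'. \<bar>i - i'\<bar> = 1 \<and> (i, j) \<in> F \<and> (i', j) \<notin> F}"

definition hboundary_length :: "(int \<times> int) set \<Rightarrow> nat" where
  "hboundary_length F = card (hboundary F)"

definition bseq :: "(int \<times> int) set \<Rightarrow> int \<Rightarrow> int \<Rightarrow> nat" where
  "bseq F n i = card {j \<in> {1..n}. int (col_sum F j) \<ge> i}"

text \<open>d_i = b_i - r_i for 1 <= i <= m, and d_i = 0 otherwise (in particular d_0 = d_{m+1} = 0;
  only indices in 0..m+1 are ever used).\<close>
definition dseq :: "(int \<times> int) set \<Rightarrow> int \<Rightarrow> int \<Rightarrow> int \<Rightarrow> int" where
  "dseq F m n i = (if 1 \<le> i \<and> i \<le> m then int (bseq F n i) - int (row_sum F i) else 0)"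

definition alt_sum :: "(int \<Rightarrow> int) \<Rightarrow> (nat \<Rightarrow> int) \<Rightarrow> nat \<Rightarrow> int" where
  "alt_sum d idx t = (\<Sum>l = 1..2 * t. (-1) ^ (l + 1) * d (idx l)) + 2 * d (idx (2 * t + 1))"

end

theory Submission
  imports Defs
begin

text \<open>
  Everything in the statement is additive over the columns of the image.  Encode column
  j by its 0/1 indicator x_j on the rows 1..m and let c_j be its height.  Then d_i is the
  sum of the column defects e_j(i) = [1 <= i <= c_j] - x_j(i), r_1 is the sum of the
  x_j(1), and the horizontal boundary has one pair for each change of some x_j between
  consecutive rows in 0..m+1.  So it suffices to prove the inequality for one column,
  with d replaced by e_j and an extra term -e_j(k) when i_{2t+1} = k; after summation
  this term is -d_k > 0, so of the two sign hypotheses only d_k < 0 is needed.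
  For one column, an alternating sum along increasing indices is bounded by the upward
  variation up to the last index plus the last value; this reduces both alternating sums
  to expressions in a single endpoint.  The resulting inequality is proved by amortisation:
  an explicit potential of the local state at row N decreases from row N to N+1 by at most
  a step budget (a finite case check), and telescoping over the rows gives the bound.
\<close>


lemma sum_int_split:
  fixes f :: "int \<Rightarrow> 'a::comm_monoid_add"
  assumes "a \<le> b" "b \<le> c"
  shows "sum f {a..<c} = sum f {a..<b} + sum f {b..<c}"
  using assms by (simp add: sum.union_disjoint[symmetric] ivl_disj_un)

lemma sum_int_telescope:
  fixes f :: "int \<Rightarrow> int"
  assumes "a \<le> b"
  shows "(\<Sum>i\<in>{a..<b}. f (i+1) - f i) = f b - f a"
  using assms
proof (induct b rule: int_ge_induct)
  case base
  then show ?case by simp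
next
  case (step i)
  have "{a..<i+1} = insert i {a..<i}" using step by auto
  then show ?case using step by simp
qed

lemma sum_int_cutoff:
  fixes g :: "int \<Rightarrow> int"
  assumes "a \<le> b" "b \<le> c"
  shows "(\<Sum>i\<in>{a..<c}. if i < b then g i else 0) = (\<Sum>i\<in>{a..<b}. g i)"
proof -
  have "(\<Sum>i\<in>{a..<c}. if i < b then g i else 0)
      = (\<Sum>i\<in>{a..<b}. if i < b then g i else 0) + (\<Sum>i\<in>{b..<c}. if i < b then g i else 0)"
    using assms by (rule sum_int_split)
  also have "(\<Sum>i\<in>{b..<c}. if i < b then g i else 0) = 0" by (intro sum.neutral) auto
  also have "(\<Sum>i\<in>{a..<b}. if i < b then g i else 0) = (\<Sum>i\<in>{a..<b}. g i)"
    by (intro sum.cong) auto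
  finally show ?thesis by simp
qed

lemma int_card_as_indicator_sum:
  assumes "finite B" "A \<subseteq> B"
  shows "int (card A) = (\<Sum>i\<in>B. if i \<in> A then 1 else 0)"
proof -
  have "(\<Sum>i\<in>B. if i \<in> A then 1 else (0::int)) = (\<Sum>i\<in>{i\<in>B. i \<in> A}. 1)"
    by (rule sum.inter_filter[OF assms(1), symmetric])
  also have "{i\<in>B. i \<in> A} = A" using assms by auto
  finally show ?thesis by simp
qed


subsection \<open>Upward variation and alternating sums\<close>

definition up_var :: "(int \<Rightarrow> int) \<Rightarrow> int \<Rightarrow> int \<Rightarrow> int" where
  "up_var v a b = (\<Sum>i\<in>{a..<b}. max 0 (v (i+1) - v i))"

lemma up_var_nonneg: "0 \<le> up_var v a b"
  unfolding up_var_def by (rule sum_nonneg) simp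

lemma up_var_empty: "up_var v a a = 0"
  unfolding up_var_def by simp

lemma up_var_split: "a \<le> b \<Longrightarrow> b \<le> c \<Longrightarrow> up_var v a c = up_var v a b + up_var v b c"
  unfolding up_var_def by (rule sum_int_split)

lemma up_var_mono: "a \<le> b \<Longrightarrow> b \<le> c \<Longrightarrow> up_var v a b \<le> up_var v a c"
  using up_var_split[of a b c v] up_var_nonneg[of v b c] by simp

lemma diff_le_up_var: "a \<le> b \<Longrightarrow> v b - v a \<le> up_var v a b"
proof -
  assume "a \<le> b"
  then have "v b - v a = (\<Sum>i\<in>{a..<b}. v (i+1) - v i)" by (simp add: sum_int_telescope)
  also have "\<dots> \<le> up_var v a b" unfolding up_var_def by (rule sum_mono) simp
  finally show ?thesis .
qed

text \<open>Summing the upward steps together with all steps gives the upward variation plus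
  the net change; this is how the upward variation enters the step budget below.\<close>
lemma up_var_plus_net_change:
  assumes "a \<le> b"
  shows "(\<Sum>i\<in>{a..<b}. max 0 (v (i+1) - v i) + (v (i+1) - v i)) = up_var v a b + v b - v a"
  unfolding up_var_def sum.distrib sum_int_telescope[OF assms] by simp

text \<open>Induction on t: each new
  pair of terms -v(I(2t+2)) + v(I(2t+3)) is an increase bounded by upward variation.\<close>
lemma alternating_sum_le_up_var:
  fixes v :: "int \<Rightarrow> int" and I :: "nat \<Rightarrow> int"
  assumes "strict_mono_on {1..2*t+1} I" "\<forall>l\<in>{1..2*t+1}. a \<le> I l"
  shows "(\<Sum>l = 1..2 * t. (-1) ^ (l + 1) * v (I l)) + v (I (2*t+1)) \<le> v a + up_var v a (I (2*t+1))"
  using assms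
proof (induct t)
  case 0
  then show ?case using diff_le_up_var[of a "I 1" v] by simp
next
  case (Suc t)
  have "strict_mono_on {1..2*t+1} I"
    using Suc.prems(1) by (rule monotone_on_subset) auto
  then have IH: "(\<Sum>l = 1..2 * t. (-1) ^ (l + 1) * v (I l)) + v (I (2*t+1))
      \<le> v a + up_var v a (I (2*t+1))"
    using Suc.hyps Suc.prems(2) by auto
  have incr: "I (2*t+1) < I (2*t+2)" "I (2*t+2) < I (2*t+3)"
    using Suc.prems(1) by (auto simp: strict_mono_on_def)
  have "a \<le> I (2*t+1)" using Suc.prems(2) by auto
  then have split: "up_var v a (I (2*t+3)) = up_var v a (I (2*t+1))
      + up_var v (I (2*t+1)) (I (2*t+2)) + up_var v (I (2*t+2)) (I (2*t+3))"
    using up_var_split[of a "I (2*t+1)" "I (2*t+3)" v]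
      up_var_split[of "I (2*t+1)" "I (2*t+2)" "I (2*t+3)" v] incr
    by simp
  have last_pair: "v (I (2*t+3)) - v (I (2*t+2)) \<le> up_var v (I (2*t+2)) (I (2*t+3))"
    using diff_le_up_var incr by simp
  have "2 * Suc t = Suc (Suc (2*t))" by simp
  then have sum: "(\<Sum>l = 1..2 * Suc t. (-1) ^ (l + 1) * v (I l)) =
      (\<Sum>l = 1..2 * t. (-1) ^ (l + 1) * v (I l)) + v (I (2*t+1)) - v (I (2*t+2))"
    by (simp add: sum.cl_ivl_Suc algebra_simps)
  have last: "2 * Suc t + 1 = 2*t+3" by simp
  show ?case
    unfolding last sum using IH last_pair split up_var_nonneg[of v "I (2*t+1)" "I (2*t+2)"] by linarith
qed

lemma alt_sum_le_up_var:
  fixes v :: "int \<Rightarrow> int" and I :: "nat \<Rightarrow> int"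
  assumes "strict_mono_on {1..2*t+1} I" "\<forall>l\<in>{1..2*t+1}. a \<le> I l"
  shows "alt_sum v I t \<le> v a + up_var v a (I (2*t+1)) + v (I (2*t+1))"
  using alternating_sum_le_up_var[OF assms, of v] unfolding alt_sum_def by simp

lemma alt_sum_cong:
  assumes "\<forall>l\<in>{1..2*t+1}. v (I l) = w (I l)"
  shows "alt_sum v I t = alt_sum w I t"
  using assms unfolding alt_sum_def by (auto intro!: sum.cong)

lemma alt_sum_sum:
  "alt_sum (\<lambda>i. \<Sum>j\<in>S. f j i) I t = (\<Sum>j\<in>S. alt_sum (f j) I t)"
  unfolding alt_sum_def by (simp add: sum_distrib_left sum.distrib sum.swap[of _ S])


subsection \<open>The local potential inequality\<close>

text \<open>Summed over
  all columns of an image it gives d_N.\<close>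
definition col_defect :: "int \<Rightarrow> int \<Rightarrow> int \<Rightarrow> int" where
  "col_defect c N xv = (if 1 \<le> N \<and> N \<le> c then 1 else 0) - xv"

text \<open>The potential is a function of the local state at a row N: the entry xv there,
  whether N \<le> c (below_c), whether N lies before the endpoint of the relevant
  alternating sum (active), and whether the running defect sum is positive (pos).\<close>
definition phase_potential :: "int \<Rightarrow> bool \<Rightarrow> bool \<Rightarrow> int \<Rightarrow> int" where
  "phase_potential xv below_c active pos =
     (if \<not> active then (if xv = 1 then 1 else 2 * pos)
      else if below_c then (if xv = 1 then 1 - pos else 1 + pos)
      else (if xv = 1 then -1 else pos))"

definition pivot_potential :: "int \<Rightarrow> bool \<Rightarrow> bool \<Rightarrow> int \<Rightarrow> int" where
  "pivot_potential xv below_c active pos =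
     (if \<not> active then (if xv = 1 then 1 - pos else (if below_c then 0 else pos))
      else if below_c then (if xv = 1 then 1 - pos else 1)
      else (if xv = 1 then -1 - pos else pos))"

text \<open>The potential at row N of a column of height c, with entry xv at row N and running
  defect sum E; P and Q are the endpoints of the two alternating sums.\<close>
definition potential :: "int \<Rightarrow> int \<Rightarrow> int \<Rightarrow> int \<Rightarrow> int \<Rightarrow> int \<Rightarrow> int \<Rightarrow> int \<Rightarrow> int" where
  "potential c k m P Q N xv E = (let pos = (if E > 0 then 1 else 0) in
     if N = 0 \<or> N = m + 1 then 0
     else if N < k then phase_potential xv (N \<le> c) (N < P) pos - E
     else if N = k then pivot_potential xv (N \<le> c) (N < P) pos
     else phase_potential xv (N \<le> c) (N < Q) pos)"

text \<open>The budget for the step from row N (entry x0) to row N+1 (entry x1): the boundary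
  contribution |x0 - x1|, minus the contributions of this step to the two upward
  variations (each taken together with the net change), plus the contribution to the
  defect sum over rows 1..k, minus the term 2 x_1 charged to the first step.\<close>
definition step_budget :: "int \<Rightarrow> int \<Rightarrow> int \<Rightarrow> int \<Rightarrow> int \<Rightarrow> int \<Rightarrow> int \<Rightarrow> int" where
  "step_budget c k P Q N x0 x1 = (let e0 = col_defect c N x0; e1 = col_defect c (N+1) x1;
      vI0 = (if N \<le> k then e0 else 0); vI1 = (if N + 1 \<le> k then e1 else 0);
      vJ0 = (if k < N then e0 else 0); vJ1 = (if k < N + 1 then e1 else 0) in
      \<bar>x0 - x1\<bar>
      - (if N < P then max 0 (vI1 - vI0) + (vI1 - vI0) else 0)
      - (if N < Q then max 0 (vJ1 - vJ0) + (vJ1 - vJ0) else 0)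
      + (if N < k then e1 else 0) - (if N = 0 then 2 * x1 else 0))"

text \<open>The
  hypotheses record what holds along a 0/1 column: the running defect sum stays
  nonnegative and vanishes at both ends.\<close>
lemma potential_step:
  fixes c k m P Q N x0 x1 E :: int
  assumes "0 \<le> N" "N \<le> m" "0 \<le> c" "c \<le> m" "1 \<le> k" "k \<le> m"
    "(1 \<le> P \<and> P < k) \<or> P = m + 1" "k + 1 \<le> Q" "Q \<le> m + 1"
    "x0 = 0 \<or> x0 = 1" "x1 = 0 \<or> x1 = 1" "N = 0 \<Longrightarrow> x0 = 0" "N = m \<Longrightarrow> x1 = 0"
    "0 \<le> E" "0 \<le> E + col_defect c (N+1) x1"
    "N = m \<Longrightarrow> E + col_defect c (N+1) x1 = 0" "N = 0 \<Longrightarrow> E = 0"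
  shows "potential c k m P Q N x0 E - potential c k m P Q (N+1) x1 (E + col_defect c (N+1) x1)
         \<le> step_budget c k P Q N x0 x1"
  using assms(11,10)
  apply (elim disjE)
  using assms
  apply (auto simp: potential_def step_budget_def col_defect_def phase_potential_def
      pivot_potential_def Let_def split: if_splits)
  apply (insert assms(1), cases "N = 0", simp_all, arith)+
  done


subsection \<open>A single 0/1 column\<close>

locale bit_column =
  fixes m :: int and x :: "int \<Rightarrow> int"
  assumes rows_pos: "1 \<le> m"
    and bit: "x i = 0 \<or> x i = 1"
    and outside: "i < 1 \<or> m < i \<Longrightarrow> x i = 0"
begin

definition height :: int where
  "height = (\<Sum>i\<in>{1..m}. x i)"

definition defect :: "int \<Rightarrow> int" where
  "defect i = col_defect height i (x i)"

definition defect_sum :: "int \<Rightarrow> int" where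
  "defect_sum N = (\<Sum>i\<in>{1..N}. defect i)"

text \<open>The defect restricted to rows \<le> k, resp. rows > k: the sequences on which the two
  alternating sums are evaluated.\<close>
definition defect_upto :: "int \<Rightarrow> int \<Rightarrow> int" where
  "defect_upto k i = (if i \<le> k then defect i else 0)"

definition defect_beyond :: "int \<Rightarrow> int \<Rightarrow> int" where
  "defect_beyond k i = (if k < i then defect i else 0)"

lemma bit_bounds: "0 \<le> x i" "x i \<le> 1"
  using bit[of i] by auto

lemma x_0: "x 0 = 0" and x_top: "x (m+1) = 0"
  using outside by simp_all

lemma height_nonneg: "0 \<le> height"
  unfolding height_def by (rule sum_nonneg) (simp add: bit_bounds)

lemma height_le: "height \<le> m"
proof -
  have "height \<le> (\<Sum>i\<in>{1..m}. 1)" unfolding height_def by (rule sum_mono) (simp add: bit_bounds)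
  also have "\<dots> = m" using rows_pos by simp
  finally show ?thesis .
qed

lemma defect_inside: "1 \<le> i \<Longrightarrow> defect i = (if i \<le> height then 1 else 0) - x i"
  unfolding defect_def col_defect_def by simp

lemma defect_outside: "\<not> (1 \<le> i \<and> i \<le> m) \<Longrightarrow> defect i = 0"
  unfolding defect_def col_defect_def using outside[of i] height_le by auto

lemma defect_top: "defect (m+1) = 0"
  by (rule defect_outside) simp

lemma bits_sum_top: "(\<Sum>i\<in>{1..m+1}. x i) = height"
proof -
  have "{1..m+1} = insert (m+1) {1..m}" using rows_pos by auto
  then show ?thesis unfolding height_def using x_top by simp
qed

lemma bits_sum_le_height:
  assumes "N \<le> m + 1"
  shows "(\<Sum>i\<in>{1..N}. x i) \<le> height"
proof -
  have "(\<Sum>i\<in>{1..N}. x i) \<le> (\<Sum>i\<in>{1..m+1}. x i)"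
    using assms by (intro sum_mono2) (auto simp: bit_bounds)
  then show ?thesis using bits_sum_top by simp
qed

lemma defect_sum_0: "defect_sum 0 = 0"
  unfolding defect_sum_def by simp

lemma defect_sum_step: "0 \<le> N \<Longrightarrow> defect_sum (N+1) = defect_sum N + defect (N+1)"
proof -
  assume "0 \<le> N"
  then have "{1..N+1} = insert (N+1) {1..N}" by auto
  then show ?thesis unfolding defect_sum_def by simp
qed

lemma defect_sum_above_height:
  assumes "height \<le> N"
  shows "defect_sum N = height - (\<Sum>i\<in>{1..N}. x i)"
proof -
  have "defect_sum N = (\<Sum>i\<in>{1..N}. (if i \<le> height then 1 else 0)) - (\<Sum>i\<in>{1..N}. x i)"
    unfolding defect_sum_def defect_def col_defect_def by (simp add: sum_subtractf)
  also have "(\<Sum>i\<in>{1..N}. (if i \<le> height then 1 else 0::int)) = (\<Sum>i\<in>{1..height}. 1)"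
    using assms by (intro sum.mono_neutral_cong_right) auto
  also have "\<dots> = height" using height_nonneg by simp
  finally show ?thesis .
qed

text \<open>The running defect sum is nonnegative along the column and vanishes past its top:
  these are the invariants the potential argument relies on.\<close>
lemma defect_sum_nonneg:
  assumes "0 \<le> N" "N \<le> m + 1"
  shows "0 \<le> defect_sum N"
proof (cases "N \<le> height")
  case True
  then have "defect_sum N = (\<Sum>i\<in>{1..N}. 1 - x i)"
    unfolding defect_sum_def defect_def col_defect_def by (intro sum.cong) auto
  then show ?thesis by (simp add: sum_nonneg bit_bounds)
next
  case False
  then show ?thesis using defect_sum_above_height[of N] bits_sum_le_height[OF assms(2)] by simp
qed

lemma defect_sum_top: "defect_sum (m+1) = 0"
  using defect_sum_above_height[of "m+1"] bits_sum_top height_le by simp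

text \<open>Telescoping the potential along the rows 0..m+1: the total step budget is nonnegative.\<close>
lemma step_budget_sum_nonneg:
  assumes "1 \<le> k" "k \<le> m" "(1 \<le> P \<and> P < k) \<or> P = m + 1" "k + 1 \<le> Q" "Q \<le> m + 1"
  shows "0 \<le> (\<Sum>i\<in>{0..<m+1}. step_budget height k P Q i (x i) (x (i+1)))"
proof -
  define R where "R N = potential height k m P Q N (x N) (defect_sum N)" for N
  have step: "R i - R (i+1) \<le> step_budget height k P Q i (x i) (x (i+1))" if "i \<in> {0..m}" for i
  proof -
    have i: "0 \<le> i" "i \<le> m" using that by auto
    have next_sum: "defect_sum (i+1) = defect_sum i + col_defect height (i+1) (x (i+1))"
      using defect_sum_step[OF i(1)] unfolding defect_def .
    show ?thesis unfolding R_def next_sum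
      by (rule potential_step)
        (use i height_nonneg height_le assms bit x_0 x_top defect_sum_0 defect_sum_top
          defect_sum_nonneg[of i] defect_sum_nonneg[of "i+1"] next_sum in auto)
  qed
  have "0 = R 0 - R (m+1)" unfolding R_def potential_def by simp
  also have "\<dots> = (\<Sum>i\<in>{0..<m+1}. R i - R (i+1))"
    using sum_int_telescope[of 0 "m+1" "\<lambda>i. - R i"] rows_pos by simp
  also have "\<dots> \<le> (\<Sum>i\<in>{0..<m+1}. step_budget height k P Q i (x i) (x (i+1)))"
    by (rule sum_mono) (use step in auto)
  finally show ?thesis .
qed

lemma step_budget_sum:
  assumes "1 \<le> k" "k \<le> m" "0 \<le> P" "P \<le> m + 1" "k + 1 \<le> Q" "Q \<le> m + 1"
  shows "(\<Sum>i\<in>{0..<m+1}. step_budget height k P Q i (x i) (x (i+1))) =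
      (\<Sum>i\<in>{0..m}. \<bar>x i - x (i+1)\<bar>)
      - (up_var (defect_upto k) 0 P + defect_upto k P)
      - (up_var (defect_beyond k) 0 Q + defect_beyond k Q)
      + defect_sum k - 2 * x 1"
proof -
  let ?vI = "defect_upto k" and ?vJ = "defect_beyond k"
  have vI_0: "?vI 0 = 0" unfolding defect_upto_def defect_def col_defect_def using x_0 assms(1) by simp
  have vJ_0: "?vJ 0 = 0" unfolding defect_beyond_def using assms(1) by simp
  have varI: "(\<Sum>i\<in>{0..<m+1}. if i < P then max 0 (?vI (i+1) - ?vI i) + (?vI (i+1) - ?vI i) else 0)
      = up_var ?vI 0 P + ?vI P"
    using assms vI_0 by (simp add: sum_int_cutoff up_var_plus_net_change)
  have varJ: "(\<Sum>i\<in>{0..<m+1}. if i < Q then max 0 (?vJ (i+1) - ?vJ i) + (?vJ (i+1) - ?vJ i) else 0)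
      = up_var ?vJ 0 Q + ?vJ Q"
    using assms vJ_0 by (simp add: sum_int_cutoff up_var_plus_net_change)
  have defects: "(\<Sum>i\<in>{0..<m+1}. if i < k then defect (i+1) else 0) = defect_sum k"
  proof -
    have "(\<Sum>i\<in>{0..<m+1}. if i < k then defect (i+1) else 0) = (\<Sum>i\<in>{0..<k}. defect (i+1))"
      using assms by (intro sum_int_cutoff) auto
    also have "\<dots> = (\<Sum>i\<in>{0..<k}. defect_sum (i+1) - defect_sum i)"
      by (intro sum.cong) (auto simp: defect_sum_step)
    also have "\<dots> = defect_sum k" using assms(1) by (simp add: sum_int_telescope defect_sum_0)
    finally show ?thesis .
  qed
  have first: "(\<Sum>i\<in>{0..<m+1}. if i = 0 then 2 * x (i+1) else 0) = 2 * x 1"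
    using rows_pos by (simp add: sum.delta)
  have budget: "step_budget height k P Q i (x i) (x (i+1)) = \<bar>x i - x (i+1)\<bar>
      - (if i < P then max 0 (?vI (i+1) - ?vI i) + (?vI (i+1) - ?vI i) else 0)
      - (if i < Q then max 0 (?vJ (i+1) - ?vJ i) + (?vJ (i+1) - ?vJ i) else 0)
      + (if i < k then defect (i+1) else 0) - (if i = 0 then 2 * x (i+1) else 0)" for i
    by (simp add: step_budget_def defect_upto_def defect_beyond_def defect_def Let_def)
  have "{0..<m+1} = {0..m}" by auto
  then show ?thesis
    unfolding budget sum_subtractf sum.distrib varI varJ defects first by simp
qed

lemma endpoint_inequality:
  assumes "1 \<le> k" "k \<le> m" "(1 \<le> P \<and> P < k) \<or> P = m + 1" "k + 1 \<le> Q" "Q \<le> m + 1"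
  shows "2 * x 1 + (up_var (defect_upto k) 0 P + defect_upto k P)
      + (up_var (defect_beyond k) 0 Q + defect_beyond k Q) - defect_sum k
      \<le> (\<Sum>i\<in>{0..m}. \<bar>x i - x (i+1)\<bar>)"
  using step_budget_sum_nonneg[OF assms] step_budget_sum[of k P Q] assms by auto

end

context bit_column
begin

text \<open>The first alternating sum, with indices in 0..k or m+1, is bounded by an endpoint
  expression with P in 1..k-1 or P = m+1.  When the last index is k the term defect k
  must be removed first; the endpoints 0 and k are then replaced by m+1.\<close>
lemma alt_sum_upto_bound:
  assumes k: "1 \<le> k" "k \<le> m"
    and mono: "strict_mono_on {1..2 * t + 1} I"
    and range: "I ` {1..2 * t + 1} \<subseteq> {0..k} \<union> {m + 1}"
  obtains P where "(1 \<le> P \<and> P < k) \<or> P = m + 1"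
    and "alt_sum defect I t - (if I (2*t+1) = k then defect k else 0)
         \<le> up_var (defect_upto k) 0 P + defect_upto k P"
proof -
  let ?v = "defect_upto k"
  have in_range: "I l \<in> {0..k} \<union> {m+1}" if "l \<in> {1..2*t+1}" for l
    using range that by blast
  have "alt_sum defect I t = alt_sum ?v I t"
  proof (rule alt_sum_cong, rule ballI)
    fix l assume "l \<in> {1..2*t+1}"
    then show "defect (I l) = ?v (I l)"
      using in_range[of l] k defect_top unfolding defect_upto_def by auto
  qed
  moreover have "?v 0 = 0"
    unfolding defect_upto_def defect_def col_defect_def using x_0 k by auto
  ultimately have bound: "alt_sum defect I t \<le> up_var ?v 0 (I (2*t+1)) + ?v (I (2*t+1))"
    using alt_sum_le_up_var[OF mono, of 0 ?v] in_range k by force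
  have v_top: "?v (m+1) = 0" unfolding defect_upto_def using k by simp
  have "I (2*t+1) \<in> {0..k} \<union> {m+1}" by (rule in_range) simp
  then consider "1 \<le> I (2*t+1) \<and> I (2*t+1) < k" | "I (2*t+1) = k" | "I (2*t+1) = 0"
    | "I (2*t+1) = m + 1" by force
  then show thesis
  proof cases
    case 1
    then show thesis using that[of "I (2*t+1)"] bound k by simp
  next
    case 2
    have "up_var ?v 0 k \<le> up_var ?v 0 (m+1)" using k by (intro up_var_mono) auto
    then show thesis using that[of "m+1"] bound v_top 2 k by (simp add: defect_upto_def)
  next
    case 3
    then show thesis
      using that[of "m+1"] bound v_top k up_var_nonneg[of ?v 0 "m+1"]
      by (simp add: up_var_empty defect_upto_def defect_def col_defect_def x_0)
  next
    case 4
    then show thesis using that[of "m+1"] bound k by simp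
  qed
qed

text \<open>The second alternating sum, with indices 0 or in k+1..m+1, is bounded by an endpoint
  expression with Q in k+1..m+1 (the endpoint 0 is replaced by m+1).\<close>
lemma alt_sum_beyond_bound:
  assumes k: "1 \<le> k" "k \<le> m"
    and mono: "strict_mono_on {1..2 * s + 1} J"
    and range: "J ` {1..2 * s + 1} \<subseteq> {0} \<union> {k + 1..m + 1}"
  obtains Q where "k + 1 \<le> Q" "Q \<le> m + 1"
    and "alt_sum defect J s \<le> up_var (defect_beyond k) 0 Q + defect_beyond k Q"
proof -
  let ?v = "defect_beyond k"
  have in_range: "J l \<in> {0} \<union> {k+1..m+1}" if "l \<in> {1..2*s+1}" for l
    using range that by blast
  have "alt_sum defect J s = alt_sum ?v J s"
  proof (rule alt_sum_cong, rule ballI)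
    fix l assume "l \<in> {1..2*s+1}"
    then show "defect (J l) = ?v (J l)"
      using in_range[of l] k x_0 unfolding defect_beyond_def defect_def col_defect_def by auto
  qed
  moreover have "alt_sum ?v J s \<le> ?v 0 + up_var ?v 0 (J (2*s+1)) + ?v (J (2*s+1))"
    by (rule alt_sum_le_up_var[OF mono]) (use in_range k in force)
  moreover have "?v 0 = 0" "?v (m+1) = 0"
    unfolding defect_beyond_def using defect_top k by auto
  moreover have "up_var ?v 0 0 = 0" by (rule up_var_empty)
  moreover have "J (2*s+1) \<in> {0} \<union> {k+1..m+1}" by (rule in_range) simp
  ultimately show thesis
    using that[of "J (2*s+1)"] that[of "m+1"] up_var_nonneg[of ?v 0 "m+1"] k by fastforce
qed

theorem column_inequality:
  assumes k: "1 \<le> k" "k \<le> m"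
    and "strict_mono_on {1..2 * t + 1} I" "I ` {1..2 * t + 1} \<subseteq> {0..k} \<union> {m + 1}"
    and "strict_mono_on {1..2 * s + 1} J" "J ` {1..2 * s + 1} \<subseteq> {0} \<union> {k + 1..m + 1}"
  shows "2 * x 1 + (alt_sum defect I t - (if I (2*t+1) = k then defect k else 0))
      + alt_sum defect J s - (\<Sum>i\<in>{1..k}. defect i)
      \<le> (\<Sum>i\<in>{0..m}. \<bar>x i - x (i+1)\<bar>)"
proof -
  obtain P where P: "(1 \<le> P \<and> P < k) \<or> P = m + 1"
    and bound_I: "alt_sum defect I t - (if I (2*t+1) = k then defect k else 0)
         \<le> up_var (defect_upto k) 0 P + defect_upto k P"
    using alt_sum_upto_bound[OF k assms(3,4)] .
  obtain Q where Q: "k + 1 \<le> Q" "Q \<le> m + 1"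
    and bound_J: "alt_sum defect J s \<le> up_var (defect_beyond k) 0 Q + defect_beyond k Q"
    using alt_sum_beyond_bound[OF k assms(5,6)] .
  show ?thesis
    using endpoint_inequality[OF k P Q] bound_I bound_J unfolding defect_sum_def by linarith
qed

end


subsection \<open>Decomposing the image into columns\<close>

definition column_bits :: "(int \<times> int) set \<Rightarrow> int \<Rightarrow> int \<Rightarrow> int" where
  "column_bits F j i = (if (i, j) \<in> F then 1 else 0)"

lemma column_bits_bit_column:
  assumes "F \<subseteq> {1..m} \<times> {1..n}" "1 \<le> m"
  shows "bit_column m (column_bits F j)"
  using assms by unfold_locales (auto simp: column_bits_def)

lemma col_sum_eq_height:
  assumes F: "F \<subseteq> {1..m} \<times> {1..n}" and m: "1 \<le> m"
  shows "int (col_sum F j) = bit_column.height m (column_bits F j)"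
proof -
  have "int (card {i. (i, j) \<in> F}) = (\<Sum>i\<in>{1..m}. if i \<in> {i. (i, j) \<in> F} then 1 else 0)"
    by (rule int_card_as_indicator_sum) (use F in auto)
  then show ?thesis
    unfolding col_sum_def bit_column.height_def[OF column_bits_bit_column[OF F m]] column_bits_def
    by simp
qed

lemma row_sum_eq_column_sum:
  assumes "F \<subseteq> {1..m} \<times> {1..n}"
  shows "int (row_sum F i) = (\<Sum>j\<in>{1..n}. column_bits F j i)"
proof -
  have "int (card {j. (i, j) \<in> F}) = (\<Sum>j\<in>{1..n}. if j \<in> {j. (i, j) \<in> F} then 1 else 0)"
    by (rule int_card_as_indicator_sum) (use assms in auto)
  then show ?thesis unfolding row_sum_def column_bits_def by simp
qed

lemma bseq_eq_column_count:
  assumes "F \<subseteq> {1..m} \<times> {1..n}" "1 \<le> m"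
  shows "int (bseq F n i) = (\<Sum>j\<in>{1..n}. if i \<le> bit_column.height m (column_bits F j) then 1 else 0)"
proof -
  have "int (bseq F n i) =
      (\<Sum>j\<in>{1..n}. if j \<in> {j \<in> {1..n}. int (col_sum F j) \<ge> i} then 1 else 0)"
    unfolding bseq_def by (rule int_card_as_indicator_sum) auto
  also have "\<dots> = (\<Sum>j\<in>{1..n}. if i \<le> bit_column.height m (column_bits F j) then 1 else 0)"
    by (rule sum.cong) (auto simp: col_sum_eq_height[OF assms])
  finally show ?thesis .
qed

lemma dseq_eq_defect_sum:
  assumes F: "F \<subseteq> {1..m} \<times> {1..n}" and m: "1 \<le> m"
  shows "dseq F m n i = (\<Sum>j\<in>{1..n}. bit_column.defect m (column_bits F j) i)"
proof (cases "1 \<le> i \<and> i \<le> m")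
  case True
  then have "dseq F m n i = (\<Sum>j\<in>{1..n}.
      (if i \<le> bit_column.height m (column_bits F j) then 1 else 0) - column_bits F j i)"
    unfolding dseq_def bseq_eq_column_count[OF F m] row_sum_eq_column_sum[OF F]
    by (simp add: sum_subtractf)
  also have "\<dots> = (\<Sum>j\<in>{1..n}. bit_column.defect m (column_bits F j) i)"
    using True bit_column.defect_inside[OF column_bits_bit_column[OF F m]] by simp
  finally show ?thesis .
next
  case False
  then show ?thesis
    using bit_column.defect_outside[OF column_bits_bit_column[OF F m]]
    unfolding dseq_def if_not_P[OF False] by simp
qed

text \<open>Every change between consecutive rows 0..m+1 inside a column yields a distinct pair of
  the horizontal boundary (oriented from the filled to the empty cell).\<close>
lemma column_changes_le_boundary:
  assumes F: "F \<subseteq> {1..m} \<times> {1..n}" and m: "0 \<le> m"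
  shows "(\<Sum>j\<in>{1..n}. \<Sum>i\<in>{0..m}. \<bar>column_bits F j i - column_bits F j (i+1)\<bar>)
         \<le> int (hboundary_length F)"
proof -
  define T where "T = {p \<in> {0..m} \<times> {1..n}. (p \<in> F) \<noteq> ((fst p + 1, snd p) \<in> F)}"
  define pair where "pair p = (if p \<in> F then (p, (fst p + 1, snd p)) else ((fst p + 1, snd p), p))"
    for p :: "int \<times> int"
  have "inj_on pair T"
    unfolding inj_on_def pair_def T_def by (auto split: if_splits)
  moreover have "pair ` T \<subseteq> hboundary F"
    unfolding pair_def T_def hboundary_def by (auto split: if_splits)
  moreover have "finite (hboundary F)"
  proof (rule finite_subset)
    show "hboundary F \<subseteq> F \<times> ({0..m+1} \<times> {1..n})"
      unfolding hboundary_def using F by (auto simp: abs_if split: if_splits)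
    show "finite (F \<times> ({0..m+1} \<times> {1..n}))"
      using F by (auto intro: finite_subset)
  qed
  ultimately have "card T \<le> hboundary_length F"
    unfolding hboundary_length_def by (rule card_inj_on_le)
  moreover have "int (card T) = (\<Sum>p\<in>{0..m} \<times> {1..n}. if p \<in> T then 1 else 0)"
    by (rule int_card_as_indicator_sum) (auto simp: T_def)
  moreover have "(\<Sum>j\<in>{1..n}. \<Sum>i\<in>{0..m}. \<bar>column_bits F j i - column_bits F j (i+1)\<bar>)
      = (\<Sum>i\<in>{0..m}. \<Sum>j\<in>{1..n}. \<bar>column_bits F j i - column_bits F j (i+1)\<bar>)"
    by (rule sum.swap)
  moreover have "\<dots> = (\<Sum>(i, j)\<in>{0..m} \<times> {1..n}. \<bar>column_bits F j i - column_bits F j (i+1)\<bar>)"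
    by (rule sum.cartesian_product)
  moreover have "\<dots> = (\<Sum>p\<in>{0..m} \<times> {1..n}. if p \<in> T then 1 else 0)"
    by (rule sum.cong) (auto simp: T_def column_bits_def)
  ultimately show ?thesis by linarith
qed


theorem corollary5p3:
  fixes F :: "(int \<times> int) set" and m n k :: int and t s :: nat
    and I J :: "nat \<Rightarrow> int"
  assumes "m \<ge> 1" and "n \<ge> 1"
    and "F \<subseteq> {1..m} \<times> {1..n}"
    and "1 \<le> k" and "k \<le> m"
    and "dseq F m n k < 0" and "dseq F m n (k + 1) \<ge> 0"
    and "strict_mono_on {1..2 * t + 1} I"
    and "I ` {1..2 * t + 1} \<subseteq> {0..k} \<union> {m + 1}"
    and "strict_mono_on {1..2 * s + 1} J"
    and "J ` {1..2 * s + 1} \<subseteq> {0} \<union> {k + 1..m + 1}"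
  shows "int (hboundary_length F) \<ge>
           2 * int (row_sum F 1) + alt_sum (dseq F m n) I t + alt_sum (dseq F m n) J s
           - (\<Sum>i = 1..k. dseq F m n i)"
proof -
  let ?x = "column_bits F" and ?e = "\<lambda>j. bit_column.defect m (column_bits F j)"
  let ?correction = "\<lambda>d :: int \<Rightarrow> int. if I (2*t+1) = k then d k else 0"
  have columns_sum: "(\<Sum>j\<in>{1..n}. 2 * ?x j 1 + (alt_sum (?e j) I t - ?correction (?e j))
      + alt_sum (?e j) J s - (\<Sum>i\<in>{1..k}. ?e j i))
    = 2 * int (row_sum F 1) + alt_sum (dseq F m n) I t - ?correction (dseq F m n)
      + alt_sum (dseq F m n) J s - (\<Sum>i = 1..k. dseq F m n i)"
    unfolding dseq_eq_defect_sum[OF assms(3,1), abs_def] alt_sum_sum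
      row_sum_eq_column_sum[OF assms(3)]
    by (simp add: sum.distrib sum_subtractf sum_distrib_left sum.swap[of _ "{1..k}"] if_distrib
        cong: if_cong)
  have "(\<Sum>j\<in>{1..n}. 2 * ?x j 1 + (alt_sum (?e j) I t - ?correction (?e j))
      + alt_sum (?e j) J s - (\<Sum>i\<in>{1..k}. ?e j i))
      \<le> (\<Sum>j\<in>{1..n}. \<Sum>i\<in>{0..m}. \<bar>?x j i - ?x j (i+1)\<bar>)"
    by (intro sum_mono bit_column.column_inequality[OF column_bits_bit_column])
      (use assms in auto)
  also have "\<dots> \<le> int (hboundary_length F)"
    using column_changes_le_boundary assms(1,3) by simp
  finally have "2 * int (row_sum F 1) + alt_sum (dseq F m n) I t - ?correction (dseq F m n)
      + alt_sum (dseq F m n) J s - (\<Sum>i = 1..k. dseq F m n i) \<le> int (hboundary_length F)"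
    unfolding columns_sum .
  moreover have "?correction (dseq F m n) \<le> 0" using \<open>dseq F m n k < 0\<close> by simp
  ultimately show ?thesis by linarith
qed

end
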